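(* Let $(p_j)_{j\ge 0}$ be a probability distribution on $\mathbb N$ with $0<p_0+p_1<1$, probability generating function $P(z)=\sum_{j\ge0}p_jz^j$ and mean $m=P'(1)<1$, and let $G(z)=\sum_{j\ge1}g_jz^j$ be the probability generating function of the Yaglom limit of the Galton–Watson process with offspring distribution $(p_j)$. If the power series $P(z)$ has radius of convergence $r_P>1$, then the power series $G(z)$ has radius of convergence $r_G>1$.
   Context: A Galton–Watson process $\{Z_n\}$ is the Markov chain on $\mathbb N$ with $Z_n=\sum_{i=1}^{Z_{n-1}}\theta_i^{(n)}$, the $\theta_i^{(n)}$ i.i.d. with law $(p_j)$, and $0$ absorbing. For $m<1$ the Yaglom limit is the unique probability distribution $(g_j)_{j\ge1}$ with $\lim_{n\to\infty}\mathbb P(Z_n=j\mid Z_n>0,Z_0=\ell)=g_j$ for all $\ell,j\ge1$; its generating function $G$ is the unique probability generating function with $G(0)=0$ and $G(P(z))=mG(z)+1-m$ for $z\in[0,1]$. *)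

theory Defs
  imports "HOL-Analysis.Analysis"
begin

definition prob_dist :: "(nat \<Rightarrow> real) \<Rightarrow> bool" where
  "prob_dist p \<longleftrightarrow> (\<forall>j. 0 \<le> p j) \<and> p sums 1"

text \<open>Law of the sum of i i.i.d. variables with law p (i-fold convolution power):
  conv_pow p i j = P(theta_1 + ... + theta_i = j).\<close>
fun conv_pow :: "(nat \<Rightarrow> real) \<Rightarrow> nat \<Rightarrow> nat \<Rightarrow> real" where
  "conv_pow p 0 j = (if j = 0 then 1 else 0)"
| "conv_pow p (Suc i) j = (\<Sum>k\<le>j. p k * conv_pow p i (j - k))"

text \<open>One-step transition probabilities of the Galton--Watson chain:
  P(Z_n = j | Z_{n-1} = i) (state 0 is absorbing automatically).\<close>
definition gw_trans :: "(nat \<Rightarrow> real) \<Rightarrow> nat \<Rightarrow> nat \<Rightarrow> real" where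
  "gw_trans p i j = conv_pow p i j"

text \<open>n-step transition probabilities P(Z_n = j | Z_0 = l).\<close>
fun gw_step :: "(nat \<Rightarrow> real) \<Rightarrow> nat \<Rightarrow> nat \<Rightarrow> nat \<Rightarrow> real" where
  "gw_step p 0 l j = (if j = l then 1 else 0)"
| "gw_step p (Suc n) l j = (\<Sum>k. gw_step p n l k * gw_trans p k j)"

definition yaglom_limit :: "(nat \<Rightarrow> real) \<Rightarrow> (nat \<Rightarrow> real) \<Rightarrow> bool" where
  "yaglom_limit p g \<longleftrightarrow>
     prob_dist g \<and> g 0 = 0 \<and>
     (\<forall>l\<ge>1. \<forall>j\<ge>1.
        (\<lambda>n. gw_step p n l j / (1 - gw_step p n l 0)) \<longlonglongrightarrow> g j)"

end

theory Submission
  imports Defs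
begin

text \<open>Pick \<open>\<delta> > 0\<close> so small that \<open>1 + \<delta>\<close> lies inside the disc of convergence of \<open>P\<close> and
  \<open>P\<close> maps \<open>[0, 1 + \<delta>]\<close> into itself; there \<open>P\<^sup>n\<close> is the generating function of \<open>Z\<^sub>n\<close>.
  At \<open>s = 1 + \<delta>\<close> the generating function of \<open>Z\<^sub>n\<close> conditioned on survival is
  \<open>(P\<^sup>n(s) - P\<^sup>n(0)) / (1 - P\<^sup>n(0)) = 1 + (P\<^sup>n(s) - 1) / (1 - P\<^sup>n(0))\<close>.
  Since \<open>P(1 + t) = 1 + m t + O(t\<^sup>2)\<close> uniformly on \<open>[-1, \<delta>]\<close>, both \<open>P\<^sup>n(s) - 1\<close> and
  \<open>1 - P\<^sup>n(0)\<close> are of exact order \<open>m\<^sup>n\<close> (the quadratic perturbations are summable), so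
  the ratio stays bounded, and by Fatou's lemma \<open>G(s) < \<infinity>\<close>.\<close>

section \<open>Generating functions of the Galton--Watson process\<close>

definition pgf :: "(nat \<Rightarrow> real) \<Rightarrow> real \<Rightarrow> real" where
  "pgf p x = (\<Sum>j. p j * x^j)"

lemma summable_pgf_le:
  fixes p :: "nat \<Rightarrow> real"
  assumes "\<And>j. 0 \<le> p j" "summable (\<lambda>j. p j * s^j)" "0 \<le> x" "x \<le> s"
  shows "summable (\<lambda>j. p j * x^j)"
proof (rule summable_comparison_test'[OF assms(2), of 0])
  fix j
  have "p j * x^j \<le> p j * s^j"
    using assms by (intro mult_left_mono power_mono) auto
  then show "norm (p j * x^j) \<le> p j * s^j"
    using assms by simp
qed

lemma sums_pgf:
  fixes p :: "nat \<Rightarrow> real"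
  assumes "\<And>j. 0 \<le> p j" "summable (\<lambda>j. p j * s^j)" "0 \<le> x" "x \<le> s"
  shows "(\<lambda>j. p j * x^j) sums pgf p x"
  using summable_pgf_le[OF assms] by (simp add: pgf_def summable_sums)

lemma pgf_nonneg:
  fixes p :: "nat \<Rightarrow> real"
  assumes "\<And>j. 0 \<le> p j" "summable (\<lambda>j. p j * s^j)" "0 \<le> x" "x \<le> s"
  shows "0 \<le> pgf p x"
  using summable_pgf_le[OF assms] assms(1,3) unfolding pgf_def by (intro suminf_nonneg) auto

lemma sums_swap_nonneg:
  fixes b :: "nat \<Rightarrow> nat \<Rightarrow> real"
  assumes nonneg: "\<And>k j. 0 \<le> b k j"
    and rows: "\<And>k. (\<lambda>j. b k j) sums S k" and total: "S sums T"
  shows "(\<lambda>j. \<Sum>k. b k j) sums T" and "summable (\<lambda>k. b k j)"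
proof -
  have "0 \<le> S k" for k
    using sums_le[OF _ sums_zero rows[of k]] nonneg by blast
  then have total': "(S has_sum T) UNIV"
    using sums_nonneg_imp_has_sum[OF total] by simp
  have rows': "((\<lambda>y. (\<lambda>(k,j). b k j) (k, y)) has_sum S k) UNIV" for k
    using sums_nonneg_imp_has_sum[OF rows[of k]] nonneg by simp
  have "(\<lambda>(k,j). b k j) summable_on Sigma UNIV (\<lambda>_. UNIV)"
    by (rule summable_on_SigmaI[OF rows']) (use total' nonneg in \<open>auto simp: has_sum_imp_summable\<close>)
  then have "((\<lambda>(k,j). b k j) has_sum T) (UNIV \<times> UNIV)"
    using has_sum_SigmaI[OF rows' total'] by simp
  then have swapped: "((\<lambda>(j,k). b k j) has_sum T) (UNIV \<times> UNIV)"
    using has_sum_swap[where f="\<lambda>(k,j). b k j" and A=UNIV and B=UNIV] by simp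
  have columns: "(\<lambda>k. b k j) summable_on UNIV" for j
    using summable_on_SigmaD1[of "\<lambda>j k. b k j" UNIV "\<lambda>_. UNIV" j] swapped
    by (auto dest: has_sum_imp_summable)
  then show "summable (\<lambda>k. b k j)"
    using summable_on_imp_summable by blast
  have "((\<lambda>j. infsum (\<lambda>k. b k j) UNIV) has_sum T) UNIV"
    using has_sum_Sigma'[where f="\<lambda>(j,k). b k j" and A=UNIV and B="\<lambda>_. UNIV"] swapped columns
    by (auto simp: has_sum_infsum)
  moreover have "infsum (\<lambda>k. b k j) UNIV = (\<Sum>k. b k j)" for j
    using columns[of j] by (metis has_sum_imp_sums has_sum_infsum sums_unique)
  ultimately show "(\<lambda>j. \<Sum>k. b k j) sums T"
    by (simp add: has_sum_imp_sums)
qed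

lemma conv_pow_nonneg: "(\<And>j. 0 \<le> p j) \<Longrightarrow> 0 \<le> conv_pow p k j"
  by (induction k arbitrary: j) (auto intro!: sum_nonneg)

lemma conv_pow_sums_pgf_power:
  assumes nonneg: "\<And>j. 0 \<le> p j" and "0 \<le> x" and summable: "summable (\<lambda>j. p j * x^j)"
  shows "(\<lambda>j. conv_pow p k j * x^j) sums (pgf p x ^ k)"
proof (induction k)
  case 0
  have "(\<lambda>j. conv_pow p 0 j * x^j) = (\<lambda>j. if j = 0 then 1 else 0)"
    by auto
  then show ?case
    using sums_single[of 0 "\<lambda>_. 1::real"] by simp
next
  case (Suc k)
  have "summable (\<lambda>i. norm (p i * x^i))" and "summable (\<lambda>i. norm (conv_pow p k i * x^i))"
    using summable Suc.IH conv_pow_nonneg[OF nonneg] nonneg \<open>0 \<le> x\<close> by (auto simp: sums_iff)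
  from Cauchy_product_sums[OF this]
  have "(\<lambda>j. \<Sum>i\<le>j. (p i * x^i) * (conv_pow p k (j - i) * x^(j - i))) sums (pgf p x * pgf p x ^ k)"
    using Suc.IH by (simp add: pgf_def sums_iff)
  moreover have "(\<Sum>i\<le>j. (p i * x^i) * (conv_pow p k (j - i) * x^(j - i))) = conv_pow p (Suc k) j * x^j"
    for j
  proof -
    have "(p i * x^i) * (conv_pow p k (j - i) * x^(j - i)) = p i * conv_pow p k (j - i) * x^j"
      if "i \<le> j" for i
    proof -
      have "x^i * x^(j - i) = x^j"
        using that by (simp flip: power_add)
      then show ?thesis
        by (metis mult.assoc mult.left_commute)
    qed
    then have "(\<Sum>i\<le>j. (p i * x^i) * (conv_pow p k (j - i) * x^(j - i)))
        = (\<Sum>i\<le>j. p i * conv_pow p k (j - i) * x^j)"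
      by (intro sum.cong) auto
    then show ?thesis
      by (simp add: sum_distrib_right)
  qed
  ultimately show ?case
    by simp
qed

text \<open>Nonnegativity is carried along the induction because the series defining \<open>gw_step\<close>
  are only known to converge through the instance \<open>x = 1\<close>.\<close>

lemma gw_step_generating_function:
  assumes nonneg: "\<And>j. 0 \<le> p j" and "1 \<le> s" and summable: "summable (\<lambda>j. p j * s^j)"
    and maps_into: "\<And>x. 0 \<le> x \<Longrightarrow> x \<le> s \<Longrightarrow> pgf p x \<le> s"
  shows "(\<forall>j. 0 \<le> gw_step p n l j) \<and>
    (\<forall>x\<in>{0..s}. (\<lambda>j. gw_step p n l j * x^j) sums (((pgf p ^^ n) x) ^ l))"
proof (induction n)
  case 0
  have "(\<lambda>j. gw_step p 0 l j * x^j) = (\<lambda>j. if j = l then x^j else 0)" for x :: real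
    by auto
  then show ?case
    using sums_single[of l "\<lambda>j. x^j" for x :: real] by simp
next
  case (Suc n)
  have fubini: "(\<lambda>j. \<Sum>k. gw_step p n l k * conv_pow p k j * x^j) sums ((pgf p ^^ Suc n) x) ^ l
      \<and> (\<forall>j. summable (\<lambda>k. gw_step p n l k * conv_pow p k j * x^j))" if x: "0 \<le> x" "x \<le> s" for x
  proof -
    have rows: "(\<lambda>j. gw_step p n l k * conv_pow p k j * x^j) sums (gw_step p n l k * pgf p x ^ k)" for k
      using sums_mult[OF conv_pow_sums_pgf_power[OF nonneg x(1) summable_pgf_le[OF nonneg summable x]]]
      by (simp add: mult.assoc)
    have total: "(\<lambda>k. gw_step p n l k * pgf p x ^ k) sums ((pgf p ^^ Suc n) x) ^ l"
      using Suc.IH pgf_nonneg[OF nonneg summable x] maps_into[OF x]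
      by (simp add: funpow_Suc_right del: funpow.simps)
    have "0 \<le> gw_step p n l k * conv_pow p k j * x^j" for k j
      using Suc.IH conv_pow_nonneg[OF nonneg] x by simp
    from sums_swap_nonneg[OF this rows total] show ?thesis
      by blast
  qed
  have summable_1: "summable (\<lambda>k. gw_step p n l k * conv_pow p k j)" for j
    using fubini[of 1] \<open>1 \<le> s\<close> by simp
  have "0 \<le> gw_step p (Suc n) l j" for j
    using summable_1 Suc.IH conv_pow_nonneg[OF nonneg] by (simp add: gw_trans_def suminf_nonneg)
  moreover have "gw_step p (Suc n) l j * x^j = (\<Sum>k. gw_step p n l k * conv_pow p k j * x^j)" for j x
    using summable_1 by (simp add: gw_trans_def suminf_mult2)
  ultimately show ?case
    using fubini by simp
qed

lemma power_remainder_nonneg: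
  fixes t :: real
  shows "-1 \<le> t \<Longrightarrow> 0 \<le> (1 + t)^j - 1 - real j * t"
  using Bernoulli_inequality[of t j] by simp

lemma power_remainder_le:
  fixes t a :: real
  assumes "-1 \<le> t" "t \<le> a"
  shows "((1 + t)^j - 1 - real j * t) * a^2 \<le> ((1 + a)^j - 1 - real j * a) * t^2"
proof (induction j)
  case (Suc j)
  have step: "(1 + x)^Suc j - 1 - real (Suc j) * x = (1 + x) * ((1 + x)^j - 1 - real j * x) + real j * x^2"
    for x :: real
    by (simp add: algebra_simps power2_eq_square)
  have "(1 + t) * (((1 + t)^j - 1 - real j * t) * a^2) \<le> (1 + a) * (((1 + a)^j - 1 - real j * a) * t^2)"
    by (rule mult_mono) (use Suc.IH assms power_remainder_nonneg[of t j] in auto)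
  then show ?case
    unfolding step by (simp add: algebra_simps)
qed simp

lemma pgf_le_chord:
  fixes p :: "nat \<Rightarrow> real"
  assumes "\<And>j. 0 \<le> p j" "p sums 1" "0 \<le> x" "x \<le> 1"
  shows "pgf p x \<le> p 0 + (1 - p 0) * x"
proof -
  have pgf: "(\<lambda>j. p j * x^j) sums pgf p x"
    using assms by (intro sums_pgf[where s=1]) (auto simp: sums_iff)
  have chord: "(\<lambda>j. x * p j + (1 - x) * (p j * 0^j)) sums (x * 1 + (1 - x) * p 0)"
    by (intro sums_add sums_mult assms(2) powser_sums_zero)
  have termwise: "p j * x^j \<le> x * p j + (1 - x) * (p j * 0^j)" for j
  proof (cases j)
    case (Suc i)
    have "x^Suc i \<le> x"
      using assms power_le_one[of x i] by (simp add: mult_left_le)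
    then have "p j * x^j \<le> p j * x"
      using Suc assms(1)[of j] by (intro mult_left_mono) auto
    then show ?thesis
      using Suc by (simp add: mult.commute)
  qed (simp add: algebra_simps)
  from sums_le[OF termwise pgf chord] show ?thesis
    by (simp add: algebra_simps)
qed

lemma mean_ge_1_minus_p0:
  fixes p :: "nat \<Rightarrow> real"
  assumes "\<And>j. 0 \<le> p j" "p sums 1" "(\<lambda>j. real j * p j) sums m"
  shows "1 - p 0 \<le> m"
proof (rule sums_le[OF _ _ assms(3)])
  show "(\<lambda>j. p j - p j * 0^j) sums (1 - p 0)"
    by (intro sums_diff assms(2) powser_sums_zero)
  show "p j - p j * 0^j \<le> real j * p j" for j
    using assms(1)[of j] by (cases j) (auto simp: algebra_simps)
qed

lemma geometric_partial_sum_le: "0 \<le> x \<Longrightarrow> x < 1 \<Longrightarrow> (\<Sum>i<n. x^i) \<le> 1 / (1 - x)"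
  for x :: real
  using sum_le_suminf[OF summable_geometric, of x "{..<n}"] suminf_geometric[of x] by auto

lemma perturbed_geometric_upper:
  fixes x e :: "nat \<Rightarrow> real"
  assumes "0 \<le> m" "\<And>n. 0 \<le> e n" "\<And>n. 0 \<le> x n"
    and step: "\<And>n. x (Suc n) \<le> m * (1 + e n) * x n"
  shows "x n \<le> x 0 * m^n * exp (\<Sum>i<n. e i)"
proof -
  have "x n \<le> x 0 * m^n * (\<Prod>i<n. 1 + e i)"
  proof (induction n)
    case (Suc n)
    have "m * (1 + e n) * x n \<le> m * (1 + e n) * (x 0 * m^n * (\<Prod>i<n. 1 + e i))"
      using Suc.IH assms(1) assms(2)[of n] by (intro mult_left_mono) auto
    then show ?case
      using step[of n] by (simp add: algebra_simps)
  qed simp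
  also have "\<dots> \<le> x 0 * m^n * exp (\<Sum>i<n. e i)"
    using assms by (intro mult_left_mono prod_le_exp_sum) auto
  finally show ?thesis .
qed

lemma perturbed_geometric_lower:
  fixes x e :: "nat \<Rightarrow> real"
  assumes "0 \<le> m" "\<And>n. e n \<in> {0..1}" "0 \<le> x 0"
    and step: "\<And>n. m * (1 - e n) * x n \<le> x (Suc n)"
  shows "x 0 * m^n * (1 - (\<Sum>i<n. e i)) \<le> x n"
proof -
  have "x 0 * m^n * (1 - (\<Sum>i<n. e i)) \<le> x 0 * m^n * (\<Prod>i<n. 1 - e i)"
    using assms by (intro mult_left_mono Weierstrass_prod_ineq) auto
  also have "\<dots> \<le> x n"
  proof (induction n)
    case (Suc n)
    have "m * (1 - e n) * (x 0 * m^n * (\<Prod>i<n. 1 - e i)) \<le> m * (1 - e n) * x n"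
      using Suc.IH assms(1) assms(2)[of n] by (intro mult_left_mono) auto
    then show ?case
      using step[of n] by (simp add: algebra_simps)
  qed simp
  finally show ?thesis .
qed

lemma summable_of_bounded_approximants:
  fixes f :: "nat \<Rightarrow> nat \<Rightarrow> real"
  assumes "\<And>j. (\<lambda>n. f n j) \<longlonglongrightarrow> g j" "\<And>j. 0 \<le> g j"
    and "\<forall>\<^sub>F n in sequentially. \<forall>J. (\<Sum>j<J. f n j) \<le> B"
  shows "summable g"
proof (rule summableI_nonneg_bounded)
  fix J
  have "(\<lambda>n. \<Sum>j<J. f n j) \<longlonglongrightarrow> (\<Sum>j<J. g j)"
    using assms(1) by (intro tendsto_sum) auto
  then show "(\<Sum>j<J. g j) \<le> B"
    using assms(3) by (auto intro: tendsto_upperbound simp: eventually_mono)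
qed (use assms(2) in auto)

section \<open>Offspring laws with generating function analytic beyond 1\<close>

locale offspring_law =
  fixes p :: "nat \<Rightarrow> real" and m a :: real
  assumes prob_dist: "prob_dist p"
    and mean: "(\<lambda>j. real j * p j) sums m"
    and a_pos: "0 < a"
    and summable_beyond_1: "summable (\<lambda>j. p j * (1 + a)^j)"
begin

lemma p_nonneg: "0 \<le> p j" and p_sums: "p sums 1"
  using prob_dist by (auto simp: prob_dist_def)

lemma sums_pgf_beyond_1: "0 \<le> x \<Longrightarrow> x \<le> 1 + a \<Longrightarrow> (\<lambda>j. p j * x^j) sums pgf p x"
  using sums_pgf[OF p_nonneg summable_beyond_1] .

text \<open>By \<open>power_remainder_le\<close>, applied termwise, \<open>(P(1 + t) - 1 - m t) / t\<^sup>2\<close> is largest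
  at \<open>t = a\<close> on \<open>[-1, a]\<close>.\<close>

definition curv :: real where
  "curv = (pgf p (1 + a) - 1 - m * a) / a^2"

lemma pgf_second_order_bounds:
  assumes "-1 \<le> t" "t \<le> a"
  shows "0 \<le> pgf p (1 + t) - 1 - m * t" and "pgf p (1 + t) - 1 - m * t \<le> curv * t^2"
proof -
  have remainder: "(\<lambda>j. p j * ((1 + x)^j - 1 - real j * x)) sums (pgf p (1 + x) - 1 - m * x)"
    if "-1 \<le> x" "x \<le> a" for x
  proof -
    have "(\<lambda>j. p j * (1 + x)^j - p j - x * (real j * p j)) sums (pgf p (1 + x) - 1 - x * m)"
      using that by (intro sums_diff sums_mult sums_pgf_beyond_1 p_sums mean) auto
    then show ?thesis
      by (simp add: algebra_simps)
  qed
  show "0 \<le> pgf p (1 + t) - 1 - m * t"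
    using sums_le[OF _ sums_zero remainder[OF assms]] p_nonneg power_remainder_nonneg[OF assms(1)]
    by simp
  have termwise: "p j * ((1 + t)^j - 1 - real j * t) \<le> p j * ((1 + a)^j - 1 - real j * a) * (t^2 / a^2)"
    for j
  proof -
    have "(1 + t)^j - 1 - real j * t \<le> ((1 + a)^j - 1 - real j * a) * (t^2 / a^2)"
      using power_remainder_le[OF assms, of j] a_pos by (simp add: field_simps)
    then show ?thesis
      unfolding mult.assoc using p_nonneg[of j] by (rule mult_left_mono)
  qed
  have "(\<lambda>j. p j * ((1 + a)^j - 1 - real j * a) * (t^2 / a^2)) sums (curv * t^2)"
    using sums_mult2[OF remainder[of a], of "t^2 / a^2"] a_pos by (simp add: curv_def)
  then show "pgf p (1 + t) - 1 - m * t \<le> curv * t^2"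
    by (rule sums_le[OF termwise remainder[OF assms]])
qed

lemma curv_nonneg: "0 \<le> curv"
  using pgf_second_order_bounds(1)[of a] a_pos by (simp add: curv_def)

end

locale subcritical_offspring_law = offspring_law +
  assumes subcritical: "m < 1" and p0_less_1: "p 0 < 1"
begin

lemma m_pos: "0 < m"
  using mean_ge_1_minus_p0[OF p_nonneg p_sums mean] p0_less_1 by simp

lemma pgf_unit_interval:
  assumes "0 \<le> x" "x \<le> 1"
  shows "0 \<le> pgf p x" and "pgf p x \<le> 1"
proof -
  show "0 \<le> pgf p x"
    using assms a_pos by (intro pgf_nonneg[OF p_nonneg summable_beyond_1]) auto
  have "pgf p x \<le> p 0 + (1 - p 0) * x"
    using pgf_le_chord[OF p_nonneg p_sums assms] .
  also have "\<dots> \<le> 1"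
    using assms p0_less_1 mult_left_le[of x "1 - p 0"] by linarith
  finally show "pgf p x \<le> 1" .
qed

definition \<delta> :: real where
  "\<delta> = min a ((1 - m) / (2 * (curv + 1)))"

lemma delta_pos: "0 < \<delta>" and delta_le_a: "\<delta> \<le> a" and curv_delta: "curv * \<delta> \<le> (1 - m) / 2"
proof -
  show "0 < \<delta>" "\<delta> \<le> a"
    using a_pos subcritical curv_nonneg by (auto simp: \<delta>_def)
  have "\<delta> \<le> (1 - m) / (2 * (curv + 1))"
    by (simp add: \<delta>_def)
  then have "2 * (curv + 1) * \<delta> \<le> 1 - m"
    using curv_nonneg by (simp add: field_simps)
  then show "curv * \<delta> \<le> (1 - m) / 2"
    using \<open>0 < \<delta>\<close> by (simp add: algebra_simps)
qed

lemma pgf_above_1: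
  assumes "0 \<le> u" "u \<le> \<delta>"
  shows "1 \<le> pgf p (1 + u)" and "pgf p (1 + u) - 1 \<le> (1 + m) / 2 * u"
proof -
  have "-1 \<le> u" "u \<le> a"
    using assms delta_le_a by auto
  note bounds = pgf_second_order_bounds[OF this]
  show "1 \<le> pgf p (1 + u)"
    using bounds(1) mult_nonneg_nonneg[of m u] m_pos assms(1) by linarith
  have "curv * u^2 \<le> curv * \<delta> * u"
    using assms curv_nonneg by (simp add: power2_eq_square mult_left_mono mult_right_mono mult.assoc)
  also have "\<dots> \<le> (1 - m) / 2 * u"
    using curv_delta assms(1) by (rule mult_right_mono)
  finally show "pgf p (1 + u) - 1 \<le> (1 + m) / 2 * u"
    using bounds(2) by (simp add: field_simps)
qed

lemma pgf_maps_interval: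
  assumes "0 \<le> x" "x \<le> 1 + \<delta>"
  shows "pgf p x \<le> 1 + \<delta>"
proof (cases "x \<le> 1")
  case True
  then show ?thesis
    using pgf_unit_interval(2)[OF assms(1)] delta_pos by simp
next
  case False
  then have "pgf p (1 + (x - 1)) - 1 \<le> (1 + m) / 2 * (x - 1)"
    using assms by (intro pgf_above_1) auto
  moreover have "(1 + m) / 2 * (x - 1) \<le> x - 1"
    using False subcritical m_pos by (intro mult_left_le_one_le) auto
  ultimately show ?thesis
    using assms by simp
qed

lemma gw_step_nonneg: "0 \<le> gw_step p n l j"
  and gw_step_sums: "0 \<le> x \<Longrightarrow> x \<le> 1 + \<delta> \<Longrightarrow>
    (\<lambda>j. gw_step p n l j * x^j) sums ((pgf p ^^ n) x) ^ l"
proof -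
  have "summable (\<lambda>j. p j * (1 + \<delta>)^j)"
    using delta_pos delta_le_a by (intro summable_pgf_le[OF p_nonneg summable_beyond_1]) auto
  from gw_step_generating_function[OF p_nonneg _ this pgf_maps_interval]
  show "0 \<le> gw_step p n l j" "0 \<le> x \<Longrightarrow> x \<le> 1 + \<delta> \<Longrightarrow>
      (\<lambda>j. gw_step p n l j * x^j) sums ((pgf p ^^ n) x) ^ l"
    using delta_pos by auto
qed

definition surv :: "nat \<Rightarrow> real" where
  "surv n = 1 - (pgf p ^^ n) 0"

lemma surv_Suc: "surv (Suc n) = 1 - pgf p (1 - surv n)"
  by (simp add: surv_def)

lemma surv_unit_interval: "0 \<le> surv n" "surv n \<le> 1"
proof -
  have "0 \<le> (pgf p ^^ n) 0 \<and> (pgf p ^^ n) 0 \<le> 1"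
    by (induction n) (auto intro: pgf_unit_interval)
  then show "0 \<le> surv n" "surv n \<le> 1"
    by (auto simp: surv_def)
qed

lemma surv_pos: "0 < surv n"
proof (induction n)
  case (Suc n)
  have "pgf p (1 - surv n) \<le> p 0 + (1 - p 0) * (1 - surv n)"
    using surv_unit_interval[of n] by (intro pgf_le_chord[OF p_nonneg p_sums]) auto
  moreover have "0 < (1 - p 0) * surv n"
    using Suc.IH p0_less_1 by simp
  ultimately show ?case
    by (simp add: surv_Suc algebra_simps)
qed (simp add: surv_def)

lemma surv_step_bounds:
  "m * (1 - curv / m * surv n) * surv n \<le> surv (Suc n)" "surv (Suc n) \<le> m * surv n"
proof -
  have "-1 \<le> - surv n" "- surv n \<le> a"
    using surv_unit_interval[of n] a_pos by auto
  note bounds = pgf_second_order_bounds[OF this]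
  show "m * (1 - curv / m * surv n) * surv n \<le> surv (Suc n)"
    using bounds(2) m_pos by (simp add: surv_Suc algebra_simps power2_eq_square)
  show "surv (Suc n) \<le> m * surv n"
    using bounds(1) by (simp add: surv_Suc)
qed

lemma surv_le_power: "surv n \<le> m^n"
proof (induction n)
  case (Suc n)
  have "m * surv n \<le> m * m^n"
    using Suc.IH m_pos by (intro mult_left_mono) auto
  then show ?case
    using surv_step_bounds(2)[of n] by simp
qed (simp add: surv_unit_interval)

lemma surv_perturbation_tail_small: "\<exists>N. \<forall>k. (\<Sum>i<k. curv / m * surv (N + i)) \<le> 1 / 2"
proof -
  have "0 < m * (1 - m) / (2 * (curv + 1))"
    using m_pos subcritical curv_nonneg by simp
  then obtain N where N: "m^N < m * (1 - m) / (2 * (curv + 1))"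
    using real_arch_pow_inv subcritical by blast
  have "(\<Sum>i<k. curv / m * surv (N + i)) \<le> 1 / 2" for k
  proof -
    have "curv / m * surv (N + i) \<le> curv / m * m^N * m^i" for i
      using mult_left_mono[OF surv_le_power[of "N + i"], of "curv / m"] curv_nonneg m_pos
      by (simp add: power_add mult.assoc)
    then have "(\<Sum>i<k. curv / m * surv (N + i)) \<le> (\<Sum>i<k. curv / m * m^N * m^i)"
      by (intro sum_mono)
    also have "\<dots> \<le> curv / m * m^N * (1 / (1 - m))"
      unfolding sum_distrib_left[symmetric] using curv_nonneg m_pos subcritical
      by (intro mult_left_mono geometric_partial_sum_le) auto
    also have "\<dots> \<le> 1 / 2"
    proof -
      have "2 * curv * m^N \<le> 2 * (curv + 1) * m^N"
        using m_pos by (intro mult_right_mono) auto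
      also have "\<dots> \<le> m * (1 - m)"
        using N curv_nonneg by (simp add: field_simps)
      finally show ?thesis
        using m_pos subcritical by (simp add: field_simps)
    qed
    finally show ?thesis .
  qed
  then show ?thesis
    by blast
qed

lemma surv_geometric_lower: "\<exists>C>0. \<exists>N. \<forall>n\<ge>N. C * m^n \<le> surv n"
proof -
  obtain N where N: "\<And>k. (\<Sum>i<k. curv / m * surv (N + i)) \<le> 1 / 2"
    using surv_perturbation_tail_small by blast
  define e where "e k = curv / m * surv (N + k)" for k
  have e_sum: "(\<Sum>i<k. e i) \<le> 1 / 2" for k
    using N by (simp add: e_def)
  have e_nonneg: "0 \<le> e k" for k
    using curv_nonneg m_pos surv_unit_interval by (simp add: e_def)
  have e_unit: "e k \<in> {0..1}" for k
    using e_sum[of "Suc k"] sum_nonneg[of "{..<k}" e] e_nonneg by fastforce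
  define C where "C = surv N / (2 * m^N)"
  have "C * m^(N + k) \<le> surv (N + k)" for k
  proof -
    have "surv N * m^k * (1 - (\<Sum>i<k. e i)) \<le> surv (N + k)"
      using perturbed_geometric_lower[of m e "\<lambda>k. surv (N + k)"] m_pos e_unit surv_unit_interval
        surv_step_bounds(1) by (simp add: e_def)
    moreover have "surv N * m^k * (1 / 2) \<le> surv N * m^k * (1 - (\<Sum>i<k. e i))"
      using e_sum[of k] surv_unit_interval[of N] m_pos by (intro mult_left_mono) auto
    moreover have "C * m^(N + k) = surv N * m^k * (1 / 2)"
      using m_pos by (simp add: C_def power_add)
    ultimately show ?thesis
      by linarith
  qed
  then have "\<forall>n\<ge>N. C * m^n \<le> surv n"
    by (auto dest!: le_Suc_ex)
  moreover have "0 < C"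
    using surv_pos m_pos by (simp add: C_def)
  ultimately show ?thesis
    by blast
qed

definition excess :: "nat \<Rightarrow> real" where
  "excess n = (pgf p ^^ n) (1 + \<delta>) - 1"

lemma excess_Suc: "excess (Suc n) = pgf p (1 + excess n) - 1"
  by (simp add: excess_def)

lemma excess_bounds: "0 \<le> excess n" "excess n \<le> \<delta>"
proof (induction n)
  case (Suc n)
  then have "1 \<le> pgf p (1 + excess n)" "pgf p (1 + excess n) - 1 \<le> (1 + m) / 2 * excess n"
    using pgf_above_1 by auto
  moreover have "(1 + m) / 2 * excess n \<le> excess n"
    using Suc.IH subcritical m_pos by (intro mult_left_le_one_le) auto
  ultimately show "0 \<le> excess (Suc n)" "excess (Suc n) \<le> \<delta>"
    using Suc.IH by (auto simp: excess_Suc)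
qed (use delta_pos in \<open>auto simp: excess_def\<close>)

lemma excess_le_contraction: "excess n \<le> ((1 + m) / 2)^n * \<delta>"
proof (induction n)
  case (Suc n)
  have "excess (Suc n) \<le> (1 + m) / 2 * excess n"
    using pgf_above_1(2)[OF excess_bounds] by (simp add: excess_Suc)
  also have "\<dots> \<le> ((1 + m) / 2)^Suc n * \<delta>"
    using Suc.IH m_pos by (simp add: mult_left_mono)
  finally show ?case .
qed (simp add: excess_def)

lemma excess_geometric_upper: "\<exists>C. \<forall>n. excess n \<le> C * m^n"
proof -
  define \<beta> where "\<beta> = (1 + m) / 2"
  have \<beta>: "0 \<le> \<beta>" "\<beta> < 1"
    using m_pos subcritical by (auto simp: \<beta>_def)
  define e where "e n = curv / m * excess n" for n
  have step: "excess (Suc n) \<le> m * (1 + e n) * excess n" for n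
  proof -
    have "-1 \<le> excess n" "excess n \<le> a"
      using excess_bounds[of n] delta_le_a by auto
    from pgf_second_order_bounds(2)[OF this]
    show ?thesis
      using m_pos by (simp add: excess_Suc e_def algebra_simps power2_eq_square)
  qed
  define E where "E = curv / m * \<delta> * (1 / (1 - \<beta>))"
  have e_sum: "(\<Sum>i<n. e i) \<le> E" for n
  proof -
    have "e i \<le> curv / m * \<delta> * \<beta>^i" for i
      using mult_left_mono[OF excess_le_contraction[of i], of "curv / m"] curv_nonneg m_pos
      by (simp add: e_def \<beta>_def mult_ac)
    then have "(\<Sum>i<n. e i) \<le> (\<Sum>i<n. curv / m * \<delta> * \<beta>^i)"
      by (intro sum_mono)
    also have "\<dots> \<le> E"
      unfolding E_def sum_distrib_left[symmetric] using \<beta> curv_nonneg m_pos delta_pos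
      by (intro mult_left_mono geometric_partial_sum_le) auto
    finally show ?thesis .
  qed
  have "excess n \<le> \<delta> * exp E * m^n" for n
  proof -
    have "excess n \<le> excess 0 * m^n * exp (\<Sum>i<n. e i)"
      using m_pos excess_bounds curv_nonneg
      by (intro perturbed_geometric_upper[where e = e and x = excess, OF _ _ _ step]) (auto simp: e_def)
    also have "\<dots> \<le> \<delta> * m^n * exp E"
      using e_sum[of n] m_pos delta_pos by (simp add: excess_def)
    finally show ?thesis
      by (simp add: mult_ac)
  qed
  then show ?thesis
    by blast
qed

definition conditioned_law :: "nat \<Rightarrow> nat \<Rightarrow> real" where
  "conditioned_law n j = (if j = 0 then 0 else gw_step p n 1 j / (1 - gw_step p n 1 0))"

lemma gw_step_extinct: "gw_step p n 1 0 = 1 - surv n"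
proof -
  have "(\<lambda>j. gw_step p n 1 j * 0^j) sums (pgf p ^^ n) 0"
    using gw_step_sums[of 0 n 1] delta_pos by simp
  then show ?thesis
    using powser_sums_zero sums_unique2 by (fastforce simp: surv_def)
qed

lemma conditioned_pgf_partial_sum_le:
  "(\<Sum>j<J. conditioned_law n j * (1 + \<delta>)^j) \<le> 1 + excess n / surv n"
proof -
  define q where "q j = (if j = 0 then 0 else gw_step p n 1 j * (1 + \<delta>)^j)" for j
  have "(\<lambda>j. gw_step p n 1 j * (1 + \<delta>)^j) sums (pgf p ^^ n) (1 + \<delta>)"
    using gw_step_sums[of "1 + \<delta>" n 1] delta_pos by simp
  then have "(\<lambda>j. gw_step p n 1 j * (1 + \<delta>)^j - (if j = 0 then gw_step p n 1 0 else 0))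
      sums ((pgf p ^^ n) (1 + \<delta>) - gw_step p n 1 0)"
    by (intro sums_diff sums_single[where f = "\<lambda>_. gw_step p n 1 0"])
  moreover have "(\<lambda>j. gw_step p n 1 j * (1 + \<delta>)^j - (if j = 0 then gw_step p n 1 0 else 0)) = q"
    by (auto simp: q_def)
  ultimately have "q sums ((pgf p ^^ n) (1 + \<delta>) - gw_step p n 1 0)"
    by simp
  then have "q sums (excess n + surv n)"
    unfolding gw_step_extinct excess_def by (simp add: algebra_simps)
  moreover have "0 \<le> q j" for j
    using gw_step_nonneg delta_pos by (simp add: q_def)
  ultimately have "(\<Sum>j<J. q j) \<le> excess n + surv n"
    using sum_le_suminf[of q "{..<J}"] by (auto simp: sums_iff)
  moreover have "(\<Sum>j<J. conditioned_law n j * (1 + \<delta>)^j) = (\<Sum>j<J. q j) / surv n"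
    unfolding sum_divide_distrib conditioned_law_def q_def gw_step_extinct by (intro sum.cong) auto
  ultimately have "(\<Sum>j<J. conditioned_law n j * (1 + \<delta>)^j) \<le> (excess n + surv n) / surv n"
    using surv_pos[of n] by (simp add: divide_right_mono)
  also have "\<dots> = 1 + excess n / surv n"
    using surv_pos[of n] by (simp add: field_simps)
  finally show ?thesis .
qed

lemma conditioned_pgf_bounded:
  "\<exists>B. \<forall>\<^sub>F n in sequentially. \<forall>J. (\<Sum>j<J. conditioned_law n j * (1 + \<delta>)^j) \<le> B"
proof -
  obtain C\<^sub>s N where C\<^sub>s: "0 < C\<^sub>s" "\<And>n. N \<le> n \<Longrightarrow> C\<^sub>s * m^n \<le> surv n"
    using surv_geometric_lower by blast
  obtain C\<^sub>e where C\<^sub>e: "\<And>n. excess n \<le> C\<^sub>e * m^n"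
    using excess_geometric_upper by blast
  have ratio: "excess n / surv n \<le> C\<^sub>e / C\<^sub>s" if "N \<le> n" for n
  proof -
    have "excess n / surv n \<le> (C\<^sub>e * m^n) / (C\<^sub>s * m^n)"
      using excess_bounds(1)[of n] C\<^sub>e[of n] C\<^sub>s that m_pos by (intro frac_le) auto
    then show ?thesis
      using m_pos by simp
  qed
  have "(\<Sum>j<J. conditioned_law n j * (1 + \<delta>)^j) \<le> 1 + C\<^sub>e / C\<^sub>s" if "N \<le> n" for n J
    using conditioned_pgf_partial_sum_le[of n J] ratio[OF that] by linarith
  then show ?thesis
    unfolding eventually_sequentially by blast
qed

lemma conv_radius_yaglom_gt_1:
  assumes "yaglom_limit p g"
  shows "1 < conv_radius g"
proof -
  have g: "\<And>j. 0 \<le> g j" "g 0 = 0"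
    "\<And>j. 1 \<le> j \<Longrightarrow> (\<lambda>n. gw_step p n 1 j / (1 - gw_step p n 1 0)) \<longlonglongrightarrow> g j"
    using assms by (auto simp: yaglom_limit_def prob_dist_def)
  have limit: "(\<lambda>n. conditioned_law n j * (1 + \<delta>)^j) \<longlonglongrightarrow> g j * (1 + \<delta>)^j" for j
  proof (cases "j = 0")
    case False
    then show ?thesis
      using tendsto_mult_right[OF g(3), of j "(1 + \<delta>)^j"] by (simp add: conditioned_law_def)
  qed (simp add: conditioned_law_def g(2))
  have nonneg: "0 \<le> g j * (1 + \<delta>)^j" for j
    using g(1) delta_pos by simp
  obtain B where "\<forall>\<^sub>F n in sequentially. \<forall>J. (\<Sum>j<J. conditioned_law n j * (1 + \<delta>)^j) \<le> B"
    using conditioned_pgf_bounded by blast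
  from summable_of_bounded_approximants[OF limit nonneg this]
  have "norm (1 + \<delta>) \<le> conv_radius g"
    by (rule conv_radius_geI)
  then show ?thesis
    using delta_pos by (simp add: less_le_trans[of 1 "ereal (1 + \<delta>)"])
qed

end

theorem theorem2p3:
  fixes p g :: "nat \<Rightarrow> real"
  assumes "prob_dist p"
    and "0 < p 0 + p 1" and "p 0 + p 1 < 1"
    and "summable (\<lambda>j. real j * p j)"
    and "(\<Sum>j. real j * p j) < 1"
    and "yaglom_limit p g"
    and "conv_radius p > 1"
  shows "conv_radius g > 1"
proof -
  obtain r where r: "1 < ereal r" "ereal r < conv_radius p"
    using ereal_dense2[OF assms(7)] by blast
  then have "summable (\<lambda>j. p j * (1 + (r - 1))^j)"
    using summable_in_conv_radius[of r p] by simp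
  moreover have "p 0 < 1"
    using assms(1,3) unfolding prob_dist_def by (metis add_increasing2 not_less)
  ultimately interpret subcritical_offspring_law p "\<Sum>j. real j * p j" "r - 1"
    using assms(1,4,5) r by unfold_locales (auto simp: summable_sums)
  show ?thesis
    using conv_radius_yaglom_gt_1[OF assms(6)] .
qed

end
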